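(* Let $A=(a_{nk})$ be an infinite complex matrix and $1<p<\infty$. (i) $A\in(c_0^\lambda(\widehat B):\ell_p)$ if and only if: (a) $\sup_{F\in\mathcal F}\sum_n\left|\sum_{k\in F}\widehat g_{nk}\right|^p<\infty$; (b) $\sum_{j=k}^\infty d_{jk}a_{nj}$ converges for all fixed $k,n\in\mathbb{N}$; (c) $\sup_{m\in\mathbb{N}}\sum_{k=0}^{m-1}|\widehat g_{nk}(m)|<\infty$ for each $n$; (d) $\sup_k\left|\frac1r\frac{\lambda_k}{\lambda_k-\lambda_{k-1}}a_{nk}\right|<\infty$ for each $n\in\mathbb{N}$. (ii) $A\in(c_0^\lambda(\widehat B):\ell_\infty)$ if and only if condition (c), condition (d), and $\sup_{n\in\mathbb{N}}\sum_k|\widehat g_{nk}|<\infty$ hold.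
   Context: Fix nonzero reals $r,s,t$ and a strictly increasing sequence $\lambda=(\lambda_k)_{k\ge0}$ of positive reals with $\lambda_k\to\infty$. Convention: terms with negative subscript are $0$. $\omega$: all complex sequences indexed by $\mathbb{N}=\{0,1,\dots\}$; $\mathcal F$: finite subsets of $\mathbb{N}$. $D=(d_{nk})$ is the inverse of the lower triangular matrix $B(r,s,t)$ having $r$ on the diagonal, $s$ on the first subdiagonal, $t$ on the second subdiagonal and zeros elsewhere; explicitly $d_{nk}=\frac1r\sum_{v=0}^{n-k}\rho_1^{\,n-k-v}\rho_2^{\,v}$ ($0\le k\le n$), $d_{nk}=0$ ($k>n$), $\rho_{1,2}=\frac{-s\pm\sqrt{s^2-4tr}}{2r}$. With $\widehat W_n(x)=\frac{1}{\lambda_n}\sum_{k=0}^n(\lambda_k-\lambda_{k-1})(rx_k+sx_{k-1}+tx_{k-2})$, $c_0^\lambda(\widehat B)=\{x\in\omega:(\widehat W_n(x))_n\in c_0\}$. For $k<m$, $\widehat g_{nk}(m)=\lambda_k\left(\frac{1}{\lambda_k-\lambda_{k-1}}\sum_{j=k}^m d_{jk}a_{nj}-\frac{1}{\lambda_{k+1}-\lambda_k}\sum_{j=k+1}^m d_{j,k+1}a_{nj}\right)$, and $\widehat g_{nk}$ is the same with sums to $\infty$ (provided convergence). $A\in(X:Y)$ means that for every $x\in X$ the series $(Ax)_n=\sum_k a_{nk}x_k$ converges for each $n$ and $Ax\in Y$. *)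

theory Defs
  imports Complex_Main
begin

text \<open>Convention: terms with negative subscript are 0.\<close>
definition lam_prev :: "(nat \<Rightarrow> real) \<Rightarrow> nat \<Rightarrow> real" where
  "lam_prev lam k = (if k = 0 then 0 else lam (k - 1))"

definition seq_back :: "(nat \<Rightarrow> complex) \<Rightarrow> nat \<Rightarrow> nat \<Rightarrow> complex" where
  "seq_back x i k = (if k < i then 0 else x (k - i))"

definition rho1 :: "real \<Rightarrow> real \<Rightarrow> real \<Rightarrow> complex" where
  "rho1 r s t = (- of_real s + csqrt (of_real (s^2 - 4*t*r))) / (2 * of_real r)"

definition rho2 :: "real \<Rightarrow> real \<Rightarrow> real \<Rightarrow> complex" where
  "rho2 r s t = (- of_real s - csqrt (of_real (s^2 - 4*t*r))) / (2 * of_real r)"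

text \<open>Entries of D = B(r,s,t)^{-1}.\<close>
definition dmat :: "real \<Rightarrow> real \<Rightarrow> real \<Rightarrow> nat \<Rightarrow> nat \<Rightarrow> complex" where
  "dmat r s t n k = (if k \<le> n then (1 / of_real r) *
      (\<Sum>v = 0..n - k. rho1 r s t ^ (n - k - v) * rho2 r s t ^ v) else 0)"

definition What :: "real \<Rightarrow> real \<Rightarrow> real \<Rightarrow> (nat \<Rightarrow> real) \<Rightarrow> (nat \<Rightarrow> complex) \<Rightarrow> nat \<Rightarrow> complex" where
  "What r s t lam x n = (1 / of_real (lam n)) *
     (\<Sum>k = 0..n. of_real (lam k - lam_prev lam k) *
        (of_real r * x k + of_real s * seq_back x 1 k + of_real t * seq_back x 2 k))"

definition c0_lam_B :: "real \<Rightarrow> real \<Rightarrow> real \<Rightarrow> (nat \<Rightarrow> real) \<Rightarrow> (nat \<Rightarrow> complex) set" where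
  "c0_lam_B r s t lam = {x. (\<lambda>n. What r s t lam x n) \<longlonglongrightarrow> 0}"

text \<open>\<open>g_{nk}(m)\<close> (meaningful for k < m).\<close>
definition ghat_m :: "real \<Rightarrow> real \<Rightarrow> real \<Rightarrow> (nat \<Rightarrow> real) \<Rightarrow> (nat \<Rightarrow> nat \<Rightarrow> complex)
    \<Rightarrow> nat \<Rightarrow> nat \<Rightarrow> nat \<Rightarrow> complex" where
  "ghat_m r s t lam a n k m = of_real (lam k) *
     ((1 / of_real (lam k - lam_prev lam k)) * (\<Sum>j = k..m. dmat r s t j k * a n j)
      - (1 / of_real (lam (Suc k) - lam k)) * (\<Sum>j = Suc k..m. dmat r s t j (Suc k) * a n j))"

definition ghat :: "real \<Rightarrow> real \<Rightarrow> real \<Rightarrow> (nat \<Rightarrow> real) \<Rightarrow> (nat \<Rightarrow> nat \<Rightarrow> complex)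
    \<Rightarrow> nat \<Rightarrow> nat \<Rightarrow> complex" where
  "ghat r s t lam a n k = of_real (lam k) *
     ((1 / of_real (lam k - lam_prev lam k)) * (\<Sum>i. dmat r s t (i + k) k * a n (i + k))
      - (1 / of_real (lam (Suc k) - lam k)) *
          (\<Sum>i. dmat r s t (i + Suc k) (Suc k) * a n (i + Suc k)))"

definition matrix_class :: "(nat \<Rightarrow> nat \<Rightarrow> complex) \<Rightarrow> (nat \<Rightarrow> complex) set \<Rightarrow> (nat \<Rightarrow> complex) set \<Rightarrow> bool" where
  "matrix_class a X Y \<longleftrightarrow> (\<forall>x\<in>X. (\<forall>n. summable (\<lambda>k. a n k * x k)) \<and> (\<lambda>n. \<Sum>k. a n k * x k) \<in> Y)"

definition ell_p :: "real \<Rightarrow> (nat \<Rightarrow> complex) set" where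
  "ell_p p = {y. summable (\<lambda>n. norm (y n) powr p)}"

definition ell_inf :: "(nat \<Rightarrow> complex) set" where
  "ell_inf = {y. bdd_above (range (\<lambda>n. norm (y n)))}"

end

theory Submission
  imports Defs "HOL-Analysis.Analysis"
begin

text \<open>\<open>\<^bold>W\<close> factors as \<open>\<Lambda> \<circ> B\<close>, where \<open>\<Lambda>\<close> is the weighted mean with weights \<open>\<lambda>\<^sub>k - \<lambda>\<^sub>k\<^sub>-\<^sub>1\<close>.
  Both factors are invertible on \<open>\<omega>\<close>: \<open>\<Lambda>\<^sup>-\<^sup>1\<close> is a two-term difference operator and \<open>B\<^sup>-\<^sup>1 = D\<close>.
  Hence \<open>c\<^sub>0\<^sup>\<lambda>(\<^bold>B) = D \<Lambda>\<^sup>-\<^sup>1 c\<^sub>0\<close>, and for \<open>x = D \<Lambda>\<^sup>-\<^sup>1 y\<close> Abel summation writes the \<open>m\<close>-th partial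
  sum of \<open>(A x)\<^sub>n\<close> as \<open>\<Sum>\<^bsub>k<m\<^esub> g\<^sub>n\<^sub>k(m) y\<^sub>k\<close> plus the diagonal term of (d). The row series therefore
  converge on \<open>c\<^sub>0\<^sup>\<lambda>(\<^bold>B)\<close> iff this triangular matrix maps \<open>c\<^sub>0\<close> into the convergent sequences,
  which by uniform boundedness (Baire category in \<open>c\<^sub>0\<close>) amounts to (b)--(d); then \<open>A x = G y\<close>
  with \<open>G = (g\<^sub>n\<^sub>k)\<close>. It remains to characterise \<open>G \<in> (c\<^sub>0 : l\<^sub>\<infinity>)\<close> and \<open>G \<in> (c\<^sub>0 : l\<^sub>p)\<close>: necessity
  again by uniform boundedness; sufficiency for \<open>l\<^sub>p\<close> because \<open>u \<mapsto> \<Sum>\<^sub>n \<bar>\<Sum>\<^sub>k g\<^sub>n\<^sub>k u\<^sub>k\<bar>\<^sup>p\<close> is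
  convex, so on the unit cube it is bounded by its values at sign vectors, i.e. by differences
  of sums over finite sets.\<close>

section \<open>Uniform boundedness on \<open>c\<^sub>0\<close>\<close>

definition c0_bcontfun :: "(nat \<Rightarrow>\<^sub>C 'a::real_normed_vector) set" where
  "c0_bcontfun = {f. (\<lambda>k. apply_bcontfun f k) \<longlonglongrightarrow> 0}"

lemma subspace_c0_bcontfun: "subspace c0_bcontfun"
  unfolding subspace_def c0_bcontfun_def
  using tendsto_scaleR[OF tendsto_const, of _ 0 sequentially]
  by (auto intro: tendsto_add_zero)

lemma closed_c0_bcontfun: "closed (c0_bcontfun :: (nat \<Rightarrow>\<^sub>C 'a::real_normed_vector) set)"
proof (rule closed_sequential_limits[THEN iffD2], intro allI impI, elim conjE)
  fix f :: "nat \<Rightarrow> nat \<Rightarrow>\<^sub>C 'a" and l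
  assume f: "\<forall>n. f n \<in> c0_bcontfun" and l: "f \<longlonglongrightarrow> l"
  show "l \<in> c0_bcontfun"
    unfolding c0_bcontfun_def
  proof (simp, rule LIMSEQ_I)
    fix e :: real assume e: "0 < e"
    obtain n where n: "dist (f n) l < e/2"
      using metric_LIMSEQ_D[OF l, of "e/2"] e by auto
    obtain K where K: "\<And>k. k \<ge> K \<Longrightarrow> norm (apply_bcontfun (f n) k) < e/2"
      using f LIMSEQ_D[of _ 0 "e/2"] e by (fastforce simp: c0_bcontfun_def)
    show "\<exists>K. \<forall>k\<ge>K. norm (apply_bcontfun l k - 0) < e"
    proof (intro exI allI impI)
      fix k assume "k \<ge> K"
      have "dist (apply_bcontfun (f n) k) (apply_bcontfun l k) \<le> dist (f n) l"
        by (rule dist_bounded)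
      hence "norm (apply_bcontfun l k) \<le> norm (apply_bcontfun (f n) k) + dist (f n) l"
        by (metis dist_norm norm_minus_commute norm_triangle_sub order_trans add_left_mono)
      thus "norm (apply_bcontfun l k - 0) < e" using K[OF \<open>k \<ge> K\<close>] n by simp
    qed
  qed
qed

lemma Bcontfun_c0:
  fixes y :: "nat \<Rightarrow> 'a::real_normed_vector"
  assumes "y \<longlonglongrightarrow> 0"
  shows "apply_bcontfun (Bcontfun y) = y" and "Bcontfun y \<in> c0_bcontfun"
    and "(\<And>k. norm (y k) \<le> 1) \<Longrightarrow> norm (Bcontfun y) \<le> 1"
proof -
  have "bounded (range y)" using assms by (rule convergent_imp_bounded)
  hence "y \<in> bcontfun" by (simp add: bcontfun_def Topological_Spaces.continuous_on_discrete)
  thus y: "apply_bcontfun (Bcontfun y) = y" by (rule Bcontfun_inverse)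
  show "Bcontfun y \<in> c0_bcontfun" using assms by (simp add: c0_bcontfun_def y)
  show "norm (Bcontfun y) \<le> 1" if "\<And>k. norm (y k) \<le> 1"
    by (rule norm_bound) (simp add: y that)
qed

text \<open>\<open>nat\<close> is not a \<open>metric_space\<close>, so the library's \<open>complete_space\<close> instance of
  \<open>bcontfun\<close> does not apply here.\<close>

lemma complete_bcontfun_nat: "complete (UNIV :: (nat \<Rightarrow>\<^sub>C 'a::banach) set)"
  unfolding complete_def
proof (intro allI impI, elim conjE)
  fix f :: "nat \<Rightarrow> (nat \<Rightarrow>\<^sub>C 'a)"
  assume "Cauchy f"
  then obtain g where g: "uniform_limit UNIV f g sequentially"
    using uniformly_convergent_eq_cauchy[of "\<lambda>_. True" f]
    unfolding Cauchy_def uniform_limit_sequentially_iff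
    by (metis dist_fun_lt_imp_dist_val_lt)
  have "bounded (range g)"
    by (rule uniform_limit_bounded[OF g]) (auto intro!: always_eventually)
  hence "g \<in> bcontfun" by (simp add: bcontfun_def)
  hence "f \<longlonglongrightarrow> Bcontfun g"
    by (intro uniform_limit_tendsto_bcontfun) (use g Bcontfun_inverse in metis)
  thus "\<exists>l\<in>UNIV. f \<longlonglongrightarrow> l" by blast
qed

lemma completely_metrizable_c0_bcontfun:
  "completely_metrizable_space (top_of_set (c0_bcontfun :: (nat \<Rightarrow>\<^sub>C 'a::banach) set))"
proof -
  have "completely_metrizable_space (euclidean :: (nat \<Rightarrow>\<^sub>C 'a) topology)"
    using Met_TC.completely_metrizable_space_mtopology complete_bcontfun_nat by auto
  moreover have "closedin euclidean (c0_bcontfun :: (nat \<Rightarrow>\<^sub>C 'a) set)"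
    using closed_c0_bcontfun closed_closedin by blast
  ultimately show ?thesis by (rule completely_metrizable_space_closedin)
qed

lemma Baire_c0_bcontfun:
  fixes T :: "nat \<Rightarrow> (nat \<Rightarrow>\<^sub>C 'a::banach) set"
  assumes closed: "\<And>M. closedin (top_of_set c0_bcontfun) (T M)"
    and cover: "\<Union>(range T) = c0_bcontfun"
  shows "\<exists>M f e. f \<in> c0_bcontfun \<and> e > 0 \<and> ball f e \<inter> c0_bcontfun \<subseteq> T M"
proof -
  have "\<exists>M. (top_of_set c0_bcontfun) interior_of T M \<noteq> {}"
  proof (rule ccontr)
    assume "\<not> ?thesis"
    hence "(top_of_set c0_bcontfun) interior_of \<Union>(range T) = {}"
      using completely_metrizable_c0_bcontfun closed by (intro Baire_category_alt) auto
    moreover have "(top_of_set c0_bcontfun) interior_of \<Union>(range T) = c0_bcontfun"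
      using cover interior_of_topspace[of "top_of_set (c0_bcontfun :: (nat \<Rightarrow>\<^sub>C 'a) set)"] by simp
    moreover have "(0 :: nat \<Rightarrow>\<^sub>C 'a) \<in> c0_bcontfun" by (simp add: c0_bcontfun_def)
    ultimately show False by simp
  qed
  then obtain M f where f: "f \<in> (top_of_set c0_bcontfun) interior_of T M" by blast
  have "openin (top_of_set c0_bcontfun) ((top_of_set c0_bcontfun) interior_of T M)"
    by (rule openin_interior_of)
  then obtain e where "e > 0" "ball f e \<inter> c0_bcontfun \<subseteq> (top_of_set c0_bcontfun) interior_of T M"
    using f by (subst (asm) openin_contains_ball) blast
  moreover have "f \<in> c0_bcontfun"
    using f interior_of_subset_topspace[of "top_of_set c0_bcontfun" "T M"] by auto
  moreover have "(top_of_set c0_bcontfun) interior_of T M \<subseteq> T M"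
    by (rule interior_of_subset)
  ultimately show ?thesis by blast
qed

lemma c0_uniform_boundedness:
  fixes \<Phi> :: "'i \<Rightarrow> (nat \<Rightarrow>\<^sub>C 'a::banach) \<Rightarrow> real" and C p :: real
  assumes cont: "\<And>i. continuous_on c0_bcontfun (\<Phi> i)"
    and C: "C \<ge> 0"
    and quasi_subadditive:
      "\<And>i f g. f \<in> c0_bcontfun \<Longrightarrow> g \<in> c0_bcontfun \<Longrightarrow> \<Phi> i (f + g) \<le> C * (\<Phi> i f + \<Phi> i g)"
    and even: "\<And>i f. f \<in> c0_bcontfun \<Longrightarrow> \<Phi> i (- f) = \<Phi> i f"
    and homogeneous: "\<And>i f c. f \<in> c0_bcontfun \<Longrightarrow> c > 0 \<Longrightarrow> \<Phi> i (c *\<^sub>R f) = c powr p * \<Phi> i f"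
    and pointwise_bounded: "\<And>f. f \<in> c0_bcontfun \<Longrightarrow> bdd_above (range (\<lambda>i. \<Phi> i f))"
  shows "\<exists>B. \<forall>i f. f \<in> c0_bcontfun \<longrightarrow> norm f \<le> 1 \<longrightarrow> \<Phi> i f \<le> B"
proof -
  note V = subspace_c0_bcontfun
  define T where "T M = {f \<in> c0_bcontfun. \<forall>i. \<Phi> i f \<le> real M}" for M :: nat
  have "closedin (top_of_set c0_bcontfun) (T M)" for M
  proof -
    have "T M = \<Inter>(insert c0_bcontfun (range (\<lambda>i. c0_bcontfun \<inter> \<Phi> i -` {..real M})))"
      by (auto simp: T_def)
    also have "closedin (top_of_set c0_bcontfun) \<dots>"
      by (rule closedin_Inter) (auto intro!: continuous_closedin_preimage cont)
    finally show ?thesis .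
  qed
  moreover have "\<Union>(range T) = c0_bcontfun"
  proof (intro equalityI subsetI)
    fix f :: "nat \<Rightarrow>\<^sub>C 'a" assume f: "f \<in> c0_bcontfun"
    obtain b where b: "\<And>i. \<Phi> i f \<le> b"
      using pointwise_bounded[OF f] by (auto simp: bdd_above_def)
    obtain M :: nat where "b \<le> real M" using real_arch_simple by blast
    thus "f \<in> \<Union>(range T)" using b f by (auto simp: T_def intro: order_trans)
  qed (auto simp: T_def)
  ultimately obtain M f0 e where f0: "f0 \<in> c0_bcontfun" and e: "e > 0"
    and ball: "ball f0 e \<inter> c0_bcontfun \<subseteq> T M"
    using Baire_c0_bcontfun by metis
  have f0T: "\<Phi> i f0 \<le> M" for i using subsetD[OF ball, of f0] e f0 by (simp add: T_def)
  show ?thesis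
  proof (intro exI allI impI)
    fix i and f :: "nat \<Rightarrow>\<^sub>C 'a" assume f: "f \<in> c0_bcontfun" and "norm f \<le> 1"
    define u where "u = (e/2) *\<^sub>R f"
    have u: "u \<in> c0_bcontfun" unfolding u_def by (rule subspace_mul[OF V f])
    have "f0 + u \<in> ball f0 e \<inter> c0_bcontfun"
      using \<open>norm f \<le> 1\<close> e subspace_add[OF V f0 u] by (simp add: u_def dist_norm)
    hence "\<Phi> i (f0 + u) \<le> M" using ball unfolding T_def by blast
    have "(e/2) powr p * \<Phi> i f = \<Phi> i u"
      unfolding u_def using e f by (intro homogeneous[symmetric]) auto
    also have "\<dots> = \<Phi> i ((f0 + u) + (- f0))" by simp
    also have "\<dots> \<le> C * (\<Phi> i (f0 + u) + \<Phi> i (- f0))"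
      using V f0 u by (intro quasi_subadditive subspace_add subspace_neg)
    also have "\<dots> = C * (\<Phi> i (f0 + u) + \<Phi> i f0)"
      using even[OF f0] by simp
    also have "\<dots> \<le> C * (2 * M)"
      using \<open>\<Phi> i (f0 + u) \<le> M\<close> f0T[of i] C by (intro mult_left_mono) auto
    finally show "\<Phi> i f \<le> C * (2 * M) / (e/2) powr p"
      using e by (simp add: field_simps)
  qed
qed

section \<open>Matrix maps on \<open>c\<^sub>0\<close>\<close>

lemma norm_suminf_mult_le:
  fixes h y :: "nat \<Rightarrow> complex"
  assumes h: "summable (\<lambda>k. norm (h k))" and y: "\<And>k. norm (y k) \<le> Y"
  shows "summable (\<lambda>k. norm (h k * y k))" and "norm (\<Sum>k. h k * y k) \<le> (\<Sum>k. norm (h k)) * Y"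
proof -
  have le: "norm (h k * y k) \<le> norm (h k) * Y" for k
    unfolding norm_mult by (rule mult_left_mono[OF y]) simp
  show hy: "summable (\<lambda>k. norm (h k * y k))"
    by (rule summable_comparison_test[OF _ summable_mult2[OF h]]) (use le in auto)
  have "norm (\<Sum>k. h k * y k) \<le> (\<Sum>k. norm (h k * y k))" by (rule summable_norm[OF hy])
  also have "\<dots> \<le> (\<Sum>k. norm (h k) * Y)" by (rule suminf_le[OF le hy summable_mult2[OF h]])
  also have "\<dots> = (\<Sum>k. norm (h k)) * Y" by (rule suminf_mult2[OF h, symmetric])
  finally show "norm (\<Sum>k. h k * y k) \<le> (\<Sum>k. norm (h k)) * Y" .
qed

definition l1_pairing :: "(nat \<Rightarrow> complex) \<Rightarrow> (nat \<Rightarrow>\<^sub>C complex) \<Rightarrow> complex" where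
  "l1_pairing h f = (\<Sum>k. h k * apply_bcontfun f k)"

context
  fixes h :: "nat \<Rightarrow> complex"
  assumes h: "summable (\<lambda>k. norm (h k))"
begin

lemma summable_norm_l1_pairing: "summable (\<lambda>k. norm (h k * apply_bcontfun f k))"
  using h by (rule norm_suminf_mult_le(1)) (rule norm_bounded)

lemma norm_l1_pairing_le: "norm (l1_pairing h f) \<le> (\<Sum>k. norm (h k)) * norm f"
  unfolding l1_pairing_def using h by (rule norm_suminf_mult_le(2)) (rule norm_bounded)

lemma l1_pairing_add: "l1_pairing h (f + g) = l1_pairing h f + l1_pairing h g"
  unfolding l1_pairing_def distrib_left plus_bcontfun.rep_eq
  by (intro suminf_add[symmetric] summable_norm_cancel[OF summable_norm_l1_pairing])

lemma l1_pairing_scaleR: "l1_pairing h (c *\<^sub>R f) = of_real c * l1_pairing h f"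
proof -
  have "l1_pairing h (c *\<^sub>R f) = (\<Sum>k. of_real c * (h k * apply_bcontfun f k))"
    by (simp add: l1_pairing_def scaleR_conv_of_real mult.left_commute)
  also have "\<dots> = of_real c * l1_pairing h f"
    unfolding l1_pairing_def by (intro suminf_mult summable_norm_cancel[OF summable_norm_l1_pairing])
  finally show ?thesis .
qed

lemma l1_pairing_uminus: "l1_pairing h (- f) = - l1_pairing h f"
  using l1_pairing_scaleR[of "-1" f] by simp

lemma continuous_on_l1_pairing: "continuous_on S (l1_pairing h)"
proof (rule lipschitz_on_continuous_on)
  show "(\<Sum>k. norm (h k))-lipschitz_on S (l1_pairing h)"
  proof (rule lipschitz_onI)
    fix f g
    have "l1_pairing h f - l1_pairing h g = l1_pairing h (f - g)"
      using l1_pairing_add[of "f - g" g] by simp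
    thus "dist (l1_pairing h f) (l1_pairing h g) \<le> (\<Sum>k. norm (h k)) * dist f g"
      using norm_l1_pairing_le[of "f - g"] by (simp add: dist_norm)
    show "0 \<le> (\<Sum>k. norm (h k))" by (intro suminf_nonneg h) auto
  qed
qed

end

lemma l1_pairing_Bcontfun:
  "y \<longlonglongrightarrow> 0 \<Longrightarrow> l1_pairing h (Bcontfun y) = (\<Sum>k. h k * y k)"
  by (simp add: l1_pairing_def Bcontfun_c0(1))

lemma norming_sequence:
  fixes h :: "nat \<Rightarrow> complex"
  obtains y where "y \<longlonglongrightarrow> 0" "\<And>k. norm (y k) \<le> 1" "(\<Sum>k. h k * y k) = of_real (\<Sum>k<K. norm (h k))"
proof
  define y where "y k = (if k < K then cnj (h k) / of_real (norm (h k)) else 0)" for k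
    \<comment> \<open>where \<open>h k = 0\<close> this is \<open>0 / 0 = 0\<close>\<close>
  show "norm (y k) \<le> 1" for k by (simp add: y_def norm_divide)
  show "y \<longlonglongrightarrow> 0"
    by (rule tendsto_eventually) (auto simp: y_def eventually_at_top_linorder intro!: exI[of _ K])
  have "h k * (cnj (h k) / of_real (norm (h k))) = of_real (norm (h k))" for k
    by (simp add: complex_norm_square[symmetric] power2_eq_square)
  hence "(\<Sum>k. h k * y k) = (\<Sum>k<K. of_real (norm (h k)))"
    by (subst suminf_finite[of "{..<K}"]) (auto simp: y_def)
  thus "(\<Sum>k. h k * y k) = of_real (\<Sum>k<K. norm (h k))" by simp
qed

lemma row_norms_bounded_if_c0_to_ell_inf:
  fixes h :: "'i \<Rightarrow> nat \<Rightarrow> complex"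
  assumes rows: "\<And>i. summable (\<lambda>k. norm (h i k))"
    and bounded: "\<And>y. y \<longlonglongrightarrow> 0 \<Longrightarrow> bdd_above (range (\<lambda>i. norm (\<Sum>k. h i k * y k)))"
  shows "\<exists>B. \<forall>i. (\<Sum>k. norm (h i k)) \<le> B"
proof -
  have "\<exists>B. \<forall>i f. f \<in> c0_bcontfun \<longrightarrow> norm f \<le> 1 \<longrightarrow> norm (l1_pairing (h i) f) \<le> B"
  proof (rule c0_uniform_boundedness[where C=1 and p=1])
    fix i f g c
    show "continuous_on c0_bcontfun (\<lambda>f. norm (l1_pairing (h i) f))"
      by (intro continuous_on_norm continuous_on_l1_pairing rows)
    show "norm (l1_pairing (h i) (f + g)) \<le> 1 * (norm (l1_pairing (h i) f) + norm (l1_pairing (h i) g))"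
      by (simp add: l1_pairing_add[OF rows] norm_triangle_ineq)
    show "norm (l1_pairing (h i) (- f)) = norm (l1_pairing (h i) f)"
      by (simp add: l1_pairing_uminus[OF rows])
    show "norm (l1_pairing (h i) (c *\<^sub>R f)) = c powr 1 * norm (l1_pairing (h i) f)" if "c > 0"
      using that by (simp add: l1_pairing_scaleR[OF rows] norm_mult)
    show "bdd_above (range (\<lambda>i. norm (l1_pairing (h i) f)))" if "f \<in> c0_bcontfun"
      using bounded[of "apply_bcontfun f"] that by (simp add: l1_pairing_def c0_bcontfun_def)
  qed simp
  then obtain B where B: "\<And>i f. f \<in> c0_bcontfun \<Longrightarrow> norm f \<le> 1 \<Longrightarrow> norm (l1_pairing (h i) f) \<le> B"
    by blast
  have "(\<Sum>k. norm (h i k)) \<le> B" for i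
  proof (rule suminf_le_const[OF rows])
    fix K
    obtain y where y: "y \<longlonglongrightarrow> 0" "\<And>k. norm (y k) \<le> 1"
      and hy: "(\<Sum>k. h i k * y k) = of_real (\<Sum>k<K. norm (h i k))"
      using norming_sequence[of "h i" K] by blast
    have "norm (l1_pairing (h i) (Bcontfun y)) \<le> B"
      using y by (intro B Bcontfun_c0)
    thus "(\<Sum>k<K. norm (h i k)) \<le> B"
      using y by (simp add: l1_pairing_Bcontfun hy sum_nonneg del: of_real_sum)
  qed
  thus ?thesis by blast
qed

lemma powr_add_le_two_powr:
  fixes a b p :: real
  assumes "a \<ge> 0" "b \<ge> 0" "p \<ge> 0"
  shows "(a + b) powr p \<le> 2 powr p * (a powr p + b powr p)"
proof -
  have "(a + b) powr p \<le> (2 * max a b) powr p"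
    using assms by (intro powr_mono2) auto
  also have "\<dots> = 2 powr p * max a b powr p" using assms by (simp add: powr_mult)
  also have "\<dots> \<le> 2 powr p * (a powr p + b powr p)"
    by (intro mult_left_mono) (auto simp: max_def)
  finally show ?thesis .
qed

lemma finite_set_sums_bounded_if_c0_to_ell_p:
  fixes g :: "nat \<Rightarrow> nat \<Rightarrow> complex" and p :: real
  assumes p: "p > 0" and rows: "\<And>n. summable (\<lambda>k. norm (g n k))"
    and ell_p: "\<And>y. y \<longlonglongrightarrow> 0 \<Longrightarrow> summable (\<lambda>n. norm (\<Sum>k. g n k * y k) powr p)"
  shows "\<exists>B. \<forall>F. finite F \<longrightarrow> summable (\<lambda>n. norm (\<Sum>k\<in>F. g n k) powr p) \<and>
            (\<Sum>n. norm (\<Sum>k\<in>F. g n k) powr p) \<le> B"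
proof -
  define \<Phi> where "\<Phi> N f = (\<Sum>n<N. norm (l1_pairing (g n) f) powr p)" for N f
  have "\<exists>B. \<forall>N f. f \<in> c0_bcontfun \<longrightarrow> norm f \<le> 1 \<longrightarrow> \<Phi> N f \<le> B"
  proof (rule c0_uniform_boundedness[where C="2 powr p" and p=p])
    fix N f h and c :: real
    show "continuous_on c0_bcontfun (\<Phi> N)"
      unfolding \<Phi>_def using p
      by (intro continuous_on_sum continuous_on_powr' continuous_on_norm continuous_on_l1_pairing
          rows continuous_on_const) auto
    have "\<Phi> N (f + h) \<le> (\<Sum>n<N. 2 powr p * (norm (l1_pairing (g n) f) powr p + norm (l1_pairing (g n) h) powr p))"
      unfolding \<Phi>_def using p
      by (intro sum_mono order_trans[OF powr_mono2 powr_add_le_two_powr])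
         (auto simp: l1_pairing_add[OF rows] norm_triangle_ineq)
    thus "\<Phi> N (f + h) \<le> 2 powr p * (\<Phi> N f + \<Phi> N h)"
      by (simp add: \<Phi>_def sum_distrib_left sum.distrib distrib_left)
    show "\<Phi> N (- f) = \<Phi> N f" by (simp add: \<Phi>_def l1_pairing_uminus[OF rows])
    show "\<Phi> N (c *\<^sub>R f) = c powr p * \<Phi> N f" if "c > 0"
      using that by (simp add: \<Phi>_def l1_pairing_scaleR[OF rows] norm_mult powr_mult sum_distrib_left)
    show "bdd_above (range (\<lambda>N. \<Phi> N f))" if "f \<in> c0_bcontfun"
    proof -
      have "summable (\<lambda>n. norm (l1_pairing (g n) f) powr p)"
        using ell_p[of "apply_bcontfun f"] that by (simp add: l1_pairing_def c0_bcontfun_def)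
      hence "\<Phi> N f \<le> (\<Sum>n. norm (l1_pairing (g n) f) powr p)" for N
        unfolding \<Phi>_def by (rule sum_le_suminf) auto
      thus ?thesis by (auto simp: bdd_above_def)
    qed
  qed auto
  then obtain B where B: "\<And>N f. f \<in> c0_bcontfun \<Longrightarrow> norm f \<le> 1 \<Longrightarrow> \<Phi> N f \<le> B" by blast
  have "summable (\<lambda>n. norm (\<Sum>k\<in>F. g n k) powr p) \<and> (\<Sum>n. norm (\<Sum>k\<in>F. g n k) powr p) \<le> B"
    if F: "finite F" for F
  proof -
    define y where "y k = (if k \<in> F then 1 else 0 :: complex)" for k
    obtain K where K: "\<And>k. k \<in> F \<Longrightarrow> k < K" using F finite_nat_bounded by blast
    have y: "y \<longlonglongrightarrow> 0" "\<And>k. norm (y k) \<le> 1"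
      by (rule tendsto_eventually) (auto simp: y_def eventually_at_top_linorder intro!: exI[of _ K] dest: K)
    have "l1_pairing (g n) (Bcontfun y) = (\<Sum>k\<in>F. g n k)" for n
      using y F by (subst l1_pairing_Bcontfun, simp, subst suminf_finite[of F]) (auto simp: y_def)
    hence bound: "(\<Sum>n<N. norm (\<Sum>k\<in>F. g n k) powr p) \<le> B" for N
      using B[of "Bcontfun y" N] y by (simp add: \<Phi>_def Bcontfun_c0)
    have "summable (\<lambda>n. norm (\<Sum>k\<in>F. g n k) powr p)"
      by (rule summableI_nonneg_bounded[OF _ bound]) simp
    thus ?thesis using suminf_le_const bound by blast
  qed
  thus ?thesis by blast
qed

lemma powr_convex_comb_le:
  fixes a b l p :: real
  assumes ab: "a \<ge> 0" "b \<ge> 0" and l: "0 \<le> l" "l \<le> 1" and p: "p \<ge> 1"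
  shows "(l * a + (1 - l) * b) powr p \<le> l * a powr p + (1 - l) * b powr p"
proof (cases "a = 0 \<or> b = 0")
  case True
  have scale: "(c * x) powr p \<le> c * x powr p" if "0 \<le> c" "c \<le> 1" "x \<ge> 0" for c x :: real
  proof (cases "c = 0")
    case False
    have "c powr p \<le> c" using powr_le_one_le[of c p] that False p by simp
    thus ?thesis using that by (simp add: powr_mult mult_right_mono)
  qed (use p in simp)
  show ?thesis
    using True scale[of "1 - l" b] scale[of l a] l ab p by auto
next
  case False
  hence "a > 0" "b > 0" using ab by auto
  have "((1 - (1 - l)) *\<^sub>R a + (1 - l) *\<^sub>R b) powr p \<le> (1 - (1 - l)) * a powr p + (1 - l) * b powr p"
    by (rule convex_onD[OF powr_convex[OF p]]) (use \<open>a > 0\<close> \<open>b > 0\<close> l in auto)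
  thus ?thesis by simp
qed

text \<open>Replace one coordinate at a time by a convex combination of \<open>\<plusminus>1\<close>.\<close>

lemma le_on_cube_if_le_on_signs:
  fixes \<Phi> :: "(nat \<Rightarrow> real) \<Rightarrow> real"
  assumes convex:
      "\<And>u v l. 0 \<le> l \<Longrightarrow> l \<le> 1 \<Longrightarrow> \<Phi> (\<lambda>k. l * u k + (1 - l) * v k) \<le> l * \<Phi> u + (1 - l) * \<Phi> v"
    and local: "\<And>u v. (\<And>k. k < K \<Longrightarrow> u k = v k) \<Longrightarrow> \<Phi> u = \<Phi> v"
    and signs: "\<And>u. (\<And>k. u k = 1 \<or> u k = -1) \<Longrightarrow> \<Phi> u \<le> V"
    and cube: "\<And>k. \<bar>u k\<bar> \<le> 1"
  shows "\<Phi> u \<le> V"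
proof -
  have induct: "\<Phi> u \<le> V" if "\<And>k. \<bar>u k\<bar> \<le> 1" "\<And>k. k \<ge> j \<Longrightarrow> u k = 1 \<or> u k = -1" for j u
    using that
  proof (induction j arbitrary: u)
    case 0 thus ?case using signs by blast
  next
    case (Suc j)
    define l where "l = (1 + u j) / 2"
    have l: "0 \<le> l" "l \<le> 1" using Suc.prems(1)[of j] by (auto simp: l_def abs_le_iff)
    have "u = (\<lambda>k. l * (u(j := 1)) k + (1 - l) * (u(j := -1)) k)"
      by (auto simp: l_def field_simps)
    hence "\<Phi> u \<le> l * \<Phi> (u(j := 1)) + (1 - l) * \<Phi> (u(j := -1))"
      using convex[OF l] by metis
    also have "\<dots> \<le> l * V + (1 - l) * V"
      using l Suc.prems by (intro add_mono mult_left_mono Suc.IH) auto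
    finally show ?case by (simp add: algebra_simps)
  qed
  have "\<Phi> u = \<Phi> (\<lambda>k. if k < K then u k else 1)" by (rule local) simp
  also have "\<dots> \<le> V" by (rule induct[where j=K]) (use cube in auto)
  finally show ?thesis .
qed

context
  fixes g :: "nat \<Rightarrow> nat \<Rightarrow> complex" and p M :: real
  assumes p: "p \<ge> 1"
    and finite_set_sums: "\<And>F N. finite F \<Longrightarrow> (\<Sum>n<N. norm (\<Sum>k\<in>F. g n k) powr p) \<le> M"
begin

lemma partial_sums_bound_on_signs:
  assumes u: "\<And>k. u k = 1 \<or> u k = -1"
  shows "(\<Sum>n<N. norm (\<Sum>k<K. g n k * of_real (u k)) powr p) \<le> 2 powr p * (2 * M)"
proof -
  define F where "F = {k\<in>{..<K}. u k = 1}"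
  define G where "G = {k\<in>{..<K}. u k \<noteq> 1}"
  have split: "(\<Sum>k<K. g n k * of_real (u k)) = (\<Sum>k\<in>F. g n k) - (\<Sum>k\<in>G. g n k)" for n
  proof -
    have "(\<Sum>k<K. g n k * of_real (u k)) = (\<Sum>k\<in>F \<union> G. g n k * of_real (u k))"
      by (rule sum.cong) (auto simp: F_def G_def)
    also have "\<dots> = (\<Sum>k\<in>F. g n k * of_real (u k)) + (\<Sum>k\<in>G. g n k * of_real (u k))"
      by (rule sum.union_disjoint) (auto simp: F_def G_def)
    also have "\<dots> = (\<Sum>k\<in>F. g n k) + (\<Sum>k\<in>G. - g n k)"
      using u by (intro arg_cong2[where f="(+)"] sum.cong) (auto simp: F_def G_def, metis of_real_minus of_real_1 mult_minus1_right mult.commute)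
    finally show ?thesis by (simp add: sum_negf)
  qed
  have "(\<Sum>n<N. norm (\<Sum>k<K. g n k * of_real (u k)) powr p)
      \<le> (\<Sum>n<N. 2 powr p * (norm (\<Sum>k\<in>F. g n k) powr p + norm (\<Sum>k\<in>G. g n k) powr p))"
    unfolding split using p
    by (intro sum_mono order_trans[OF powr_mono2 powr_add_le_two_powr] norm_triangle_ineq4) auto
  also have "\<dots> = 2 powr p * ((\<Sum>n<N. norm (\<Sum>k\<in>F. g n k) powr p) + (\<Sum>n<N. norm (\<Sum>k\<in>G. g n k) powr p))"
    by (simp add: sum_distrib_left sum.distrib distrib_left)
  also have "\<dots> \<le> 2 powr p * (2 * M)"
    using finite_set_sums[of F N] finite_set_sums[of G N] by (simp add: F_def G_def)
  finally show ?thesis .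
qed

lemma partial_sums_bound_on_real_cube:
  assumes u: "\<And>k. \<bar>u k\<bar> \<le> 1"
  shows "(\<Sum>n<N. norm (\<Sum>k<K. g n k * of_real (u k)) powr p) \<le> 2 powr p * (2 * M)"
proof (rule le_on_cube_if_le_on_signs[where K=K and \<Phi>="\<lambda>u. \<Sum>n<N. norm (\<Sum>k<K. g n k * of_real (u k)) powr p"])
  fix u v :: "nat \<Rightarrow> real" and l :: real
  assume l: "0 \<le> l" "l \<le> 1"
  let ?U = "\<lambda>n. norm (\<Sum>k<K. g n k * of_real (u k))" and ?V = "\<lambda>n. norm (\<Sum>k<K. g n k * of_real (v k))"
  have "norm (\<Sum>k<K. g n k * of_real (l * u k + (1 - l) * v k)) \<le> l * ?U n + (1 - l) * ?V n" for n
  proof -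
    have "norm (1 - complex_of_real l) = 1 - l"
      using l by (metis abs_of_nonneg diff_ge_0_iff_ge norm_of_real of_real_1 of_real_diff)
    moreover have "(\<Sum>k<K. g n k * of_real (l * u k + (1 - l) * v k))
        = of_real l * (\<Sum>k<K. g n k * of_real (u k)) + of_real (1 - l) * (\<Sum>k<K. g n k * of_real (v k))"
      by (simp add: sum_distrib_left sum.distrib[symmetric] algebra_simps)
    ultimately show ?thesis
      using l norm_triangle_ineq[of "of_real l * (\<Sum>k<K. g n k * of_real (u k))"
          "of_real (1 - l) * (\<Sum>k<K. g n k * of_real (v k))"]
      by (simp add: norm_mult)
  qed
  hence "norm (\<Sum>k<K. g n k * of_real (l * u k + (1 - l) * v k)) powr p
      \<le> l * ?U n powr p + (1 - l) * ?V n powr p" for n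
    using p l by (intro order_trans[OF powr_mono2 powr_convex_comb_le]) auto
  thus "(\<Sum>n<N. norm (\<Sum>k<K. g n k * of_real (l * u k + (1 - l) * v k)) powr p)
      \<le> l * (\<Sum>n<N. ?U n powr p) + (1 - l) * (\<Sum>n<N. ?V n powr p)"
    by (simp add: sum_distrib_left sum.distrib[symmetric] sum_mono)
qed (use u partial_sums_bound_on_signs in auto)

lemma partial_sums_bound_on_complex_ball:
  assumes w: "\<And>k. norm (w k) \<le> 1"
  shows "(\<Sum>n<N. norm (\<Sum>k<K. g n k * w k) powr p) \<le> 2 powr p * (4 * (2 powr p * M))"
proof -
  let ?S = "\<lambda>u n. norm (\<Sum>k<K. g n k * of_real (u k))"
  define u where "u k = Re (w k)" for k
  define v where "v k = Im (w k)" for k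
  have uv: "\<bar>u k\<bar> \<le> 1" "\<bar>v k\<bar> \<le> 1" for k
    using w[of k] abs_Re_le_cmod[of "w k"] abs_Im_le_cmod[of "w k"] by (auto simp: u_def v_def)
  have "(\<Sum>k<K. g n k * w k) = (\<Sum>k<K. g n k * of_real (u k)) + \<i> * (\<Sum>k<K. g n k * of_real (v k))" for n
  proof -
    have "w k = of_real (u k) + \<i> * of_real (v k)" for k by (simp add: u_def v_def complex_eq_iff)
    thus ?thesis by (simp add: sum_distrib_left sum.distrib[symmetric] algebra_simps)
  qed
  hence "norm (\<Sum>k<K. g n k * w k) \<le> ?S u n + ?S v n" for n
    by (metis norm_triangle_ineq norm_ii norm_mult mult_1)
  hence "(\<Sum>n<N. norm (\<Sum>k<K. g n k * w k) powr p) \<le> (\<Sum>n<N. 2 powr p * (?S u n powr p + ?S v n powr p))"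
    using p by (intro sum_mono order_trans[OF powr_mono2 powr_add_le_two_powr]) auto
  also have "\<dots> = 2 powr p * ((\<Sum>n<N. ?S u n powr p) + (\<Sum>n<N. ?S v n powr p))"
    by (simp add: sum_distrib_left sum.distrib distrib_left)
  also have "\<dots> \<le> 2 powr p * (4 * (2 powr p * M))"
  proof -
    have "(\<Sum>n<N. ?S u n powr p) \<le> 2 powr p * (2 * M)" "(\<Sum>n<N. ?S v n powr p) \<le> 2 powr p * (2 * M)"
      using uv by (intro partial_sums_bound_on_real_cube; blast)+
    thus ?thesis by (intro mult_left_mono) auto
  qed
  finally show ?thesis .
qed

end

lemma c0_to_ell_p_if_finite_set_sums_bounded:
  fixes g :: "nat \<Rightarrow> nat \<Rightarrow> complex" and p M :: real
  assumes p: "p \<ge> 1" and rows: "\<And>n. summable (\<lambda>k. norm (g n k))"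
    and finite_set_sums: "\<And>F. finite F \<Longrightarrow> summable (\<lambda>n. norm (\<Sum>k\<in>F. g n k) powr p) \<and>
              (\<Sum>n. norm (\<Sum>k\<in>F. g n k) powr p) \<le> M"
    and y: "y \<longlonglongrightarrow> 0"
  shows "summable (\<lambda>n. norm (\<Sum>k. g n k * y k) powr p)"
proof -
  define C where "C = 2 powr p * (4 * (2 powr p * M))"
  obtain Y where Y: "Y > 0" "\<And>k. norm (y k) \<le> Y"
    using convergent_imp_Bseq[of y] y by (auto simp: convergent_def Bseq_def)
  have partial: "(\<Sum>n<N. norm (\<Sum>k<K. g n k * y k) powr p) \<le> Y powr p * C" for N K
  proof -
    have "(\<Sum>n<N. norm (\<Sum>k<K. g n k * (y k / of_real Y)) powr p) \<le> C"
      unfolding C_def using p Y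
    proof (intro partial_sums_bound_on_complex_ball)
      show "(\<Sum>n<N. norm (\<Sum>k\<in>F. g n k) powr p) \<le> M" if "finite F" for F N
        using finite_set_sums[OF that] by (meson order_trans sum_le_suminf finite_lessThan powr_ge_zero)
    qed (auto simp: norm_divide)
    moreover have "norm (\<Sum>k<K. g n k * y k) powr p = Y powr p * norm (\<Sum>k<K. g n k * (y k / of_real Y)) powr p" for n
    proof -
      have "(\<Sum>k<K. g n k * y k) = of_real Y * (\<Sum>k<K. g n k * (y k / of_real Y))"
        using Y by (simp add: sum_distrib_left)
      thus ?thesis using Y by (simp add: norm_mult powr_mult)
    qed
    ultimately show ?thesis by (simp add: sum_distrib_left[symmetric] mult_left_mono)
  qed
  have "summable (\<lambda>k. g n k * y k)" for n
  proof (rule summable_norm_cancel, rule summable_comparison_test[OF _ summable_mult2[OF rows[of n], of Y]])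
    show "\<exists>N. \<forall>k\<ge>N. norm (norm (g n k * y k)) \<le> norm (g n k) * Y"
      using Y by (auto simp: norm_mult intro!: mult_left_mono)
  qed
  hence "(\<lambda>K. \<Sum>n<N. norm (\<Sum>k<K. g n k * y k) powr p) \<longlonglongrightarrow> (\<Sum>n<N. norm (\<Sum>k. g n k * y k) powr p)" for N
    using p by (intro tendsto_sum tendsto_powr' tendsto_norm summable_LIMSEQ tendsto_const) auto
  hence "(\<Sum>n<N. norm (\<Sum>k. g n k * y k) powr p) \<le> Y powr p * C" for N
    by (rule tendsto_le[OF trivial_limit_sequentially tendsto_const]) (simp add: partial)
  thus ?thesis by (rule summableI_nonneg_bounded[rotated]) simp
qed

lemma c0_to_ell_p_iff:
  fixes g :: "nat \<Rightarrow> nat \<Rightarrow> complex" and p :: real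
  assumes p: "p \<ge> 1" and rows: "\<And>n. summable (\<lambda>k. norm (g n k))"
  shows "(\<forall>y. y \<longlonglongrightarrow> 0 \<longrightarrow> (\<lambda>n. \<Sum>k. g n k * y k) \<in> ell_p p) \<longleftrightarrow>
    (\<exists>M. \<forall>F. finite F \<longrightarrow> summable (\<lambda>n. norm (\<Sum>k\<in>F. g n k) powr p) \<and>
        (\<Sum>n. norm (\<Sum>k\<in>F. g n k) powr p) \<le> M)"
proof
  assume "\<forall>y. y \<longlonglongrightarrow> 0 \<longrightarrow> (\<lambda>n. \<Sum>k. g n k * y k) \<in> ell_p p"
  thus "\<exists>M. \<forall>F. finite F \<longrightarrow> summable (\<lambda>n. norm (\<Sum>k\<in>F. g n k) powr p) \<and>
      (\<Sum>n. norm (\<Sum>k\<in>F. g n k) powr p) \<le> M"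
    using p by (intro finite_set_sums_bounded_if_c0_to_ell_p rows) (auto simp: ell_p_def)
next
  assume "\<exists>M. \<forall>F. finite F \<longrightarrow> summable (\<lambda>n. norm (\<Sum>k\<in>F. g n k) powr p) \<and>
      (\<Sum>n. norm (\<Sum>k\<in>F. g n k) powr p) \<le> M"
  thus "\<forall>y. y \<longlonglongrightarrow> 0 \<longrightarrow> (\<lambda>n. \<Sum>k. g n k * y k) \<in> ell_p p"
    using c0_to_ell_p_if_finite_set_sums_bounded[where g=g, OF p rows] by (auto simp: ell_p_def)
qed

lemma c0_to_ell_inf_iff:
  fixes g :: "nat \<Rightarrow> nat \<Rightarrow> complex"
  assumes rows: "\<And>n. summable (\<lambda>k. norm (g n k))"
  shows "(\<forall>y. y \<longlonglongrightarrow> 0 \<longrightarrow> (\<lambda>n. \<Sum>k. g n k * y k) \<in> ell_inf) \<longleftrightarrow>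
    (\<exists>M. \<forall>n. (\<Sum>k. norm (g n k)) \<le> M)"
proof
  assume "\<forall>y. y \<longlonglongrightarrow> 0 \<longrightarrow> (\<lambda>n. \<Sum>k. g n k * y k) \<in> ell_inf"
  thus "\<exists>M. \<forall>n. (\<Sum>k. norm (g n k)) \<le> M"
    by (intro row_norms_bounded_if_c0_to_ell_inf rows) (auto simp: ell_inf_def)
next
  assume "\<exists>M. \<forall>n. (\<Sum>k. norm (g n k)) \<le> M"
  then obtain M where M: "\<And>n. (\<Sum>k. norm (g n k)) \<le> M" by blast
  show "\<forall>y. y \<longlonglongrightarrow> 0 \<longrightarrow> (\<lambda>n. \<Sum>k. g n k * y k) \<in> ell_inf"
  proof (intro allI impI)
    fix y :: "nat \<Rightarrow> complex" assume "y \<longlonglongrightarrow> 0"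
    then obtain Y where Y: "Y > 0" "\<And>k. norm (y k) \<le> Y"
      using convergent_imp_Bseq[of y] by (auto simp: convergent_def Bseq_def)
    have "norm (\<Sum>k. g n k * y k) \<le> M * Y" for n
      using norm_suminf_mult_le(2)[OF rows Y(2)] M[of n] Y(1)
      by (meson mult_right_mono less_imp_le order_trans)
    hence "bdd_above (range (\<lambda>n. norm (\<Sum>k. g n k * y k)))" by (rule bdd_aboveI2)
    thus "(\<lambda>n. \<Sum>k. g n k * y k) \<in> ell_inf" by (simp add: ell_inf_def)
  qed
qed

lemma triangular_row_norms_bounded_if_convergent_on_c0:
  fixes E :: "nat \<Rightarrow> nat \<Rightarrow> complex"
  assumes conv: "\<And>y. y \<longlonglongrightarrow> 0 \<Longrightarrow> convergent (\<lambda>m. \<Sum>k\<le>m. E m k * y k)"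
  shows "\<exists>M. \<forall>m. (\<Sum>k\<le>m. norm (E m k)) \<le> M"
proof -
  define h where "h m k = (if k \<le> m then E m k else 0)" for m k
  have finite_row: "(\<Sum>k. f (h m k)) = (\<Sum>k\<le>m. f (E m k))" if "f 0 = 0" for f :: "complex \<Rightarrow> 'a::real_normed_vector" and m
    using that by (subst suminf_finite[of "{..m}"]) (auto simp: h_def)
  have rows: "summable (\<lambda>k. norm (h m k))" for m
    by (rule summable_finite[of "{..m}"]) (auto simp: h_def)
  have "\<exists>B. \<forall>m. (\<Sum>k. norm (h m k)) \<le> B"
  proof (rule row_norms_bounded_if_c0_to_ell_inf[OF rows])
    fix y :: "nat \<Rightarrow> complex" assume "y \<longlonglongrightarrow> 0"
    hence "Bseq (\<lambda>m. \<Sum>k\<le>m. E m k * y k)" by (intro convergent_imp_Bseq conv)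
    moreover have "(\<Sum>k. h m k * y k) = (\<Sum>k\<le>m. E m k * y k)" for m
      by (subst suminf_finite[of "{..m}"]) (auto simp: h_def)
    ultimately show "bdd_above (range (\<lambda>m. norm (\<Sum>k. h m k * y k)))"
      by (auto simp: Bseq_def bdd_above_def)
  qed
  thus ?thesis using finite_row[of norm] by simp
qed

lemma norm_suminf_tail_le:
  fixes g y :: "nat \<Rightarrow> complex"
  assumes g: "summable (\<lambda>k. norm (g k))" and y: "\<And>k. k \<ge> K \<Longrightarrow> norm (y k) \<le> d"
  shows "norm (\<Sum>k. g (k + K) * y (k + K)) \<le> (\<Sum>k. norm (g k)) * d"
proof -
  have shifted: "summable (\<lambda>k. norm (g (k + K)))"
    using summable_iff_shift[of "\<lambda>k. norm (g k)" K] g by simp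
  have "norm (\<Sum>k. g (k + K) * y (k + K)) \<le> (\<Sum>k. norm (g (k + K))) * d"
    using y by (intro norm_suminf_mult_le(2)[OF shifted]) simp
  also have "\<dots> \<le> (\<Sum>k. norm (g k)) * d"
  proof (rule mult_right_mono)
    show "(\<Sum>k. norm (g (k + K))) \<le> (\<Sum>k. norm (g k))"
      using suminf_split_initial_segment[OF g, of K] by (simp add: sum_nonneg)
    show "0 \<le> d" using y[of K] norm_ge_zero order_trans by blast
  qed
  finally show ?thesis .
qed

context
  fixes E :: "nat \<Rightarrow> nat \<Rightarrow> complex" and g :: "nat \<Rightarrow> complex" and M :: real
  assumes columns: "\<And>k. (\<lambda>m. E m k) \<longlonglongrightarrow> g k"
    and rows: "\<And>m. (\<Sum>k\<le>m. norm (E m k)) \<le> M"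
begin

lemma summable_norm_column_limits: "summable (\<lambda>k. norm (g k))"
  and suminf_norm_column_limits_le: "(\<Sum>k. norm (g k)) \<le> M"
proof -
  have partial: "(\<Sum>k<K. norm (g k)) \<le> M" for K
  proof (rule tendsto_le[OF trivial_limit_sequentially tendsto_const])
    show "(\<lambda>m. \<Sum>k<K. norm (E m k)) \<longlonglongrightarrow> (\<Sum>k<K. norm (g k))"
      by (intro tendsto_sum tendsto_norm columns)
    show "\<forall>\<^sub>F m in sequentially. (\<Sum>k<K. norm (E m k)) \<le> M"
    proof (rule eventually_sequentiallyI[of K])
      fix m assume "K \<le> m"
      hence "(\<Sum>k<K. norm (E m k)) \<le> (\<Sum>k\<le>m. norm (E m k))" by (intro sum_mono2) auto
      thus "(\<Sum>k<K. norm (E m k)) \<le> M" using rows[of m] by linarith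
    qed
  qed
  show "summable (\<lambda>k. norm (g k))" by (rule summableI_nonneg_bounded[OF _ partial]) simp
  thus "(\<Sum>k. norm (g k)) \<le> M" by (rule suminf_le_const[OF _ partial])
qed

text \<open>Split at \<open>K\<close> beyond which \<open>\<bar>y\<^sub>k\<bar> \<le> d\<close>: the head converges columnwise, and both tails are
  at most \<open>M d\<close>.\<close>

lemma triangular_tendsto_on_c0:
  assumes y: "y \<longlonglongrightarrow> 0"
  shows "(\<lambda>m. \<Sum>k\<le>m. E m k * y k) \<longlonglongrightarrow> (\<Sum>k. g k * y k)"
proof (rule LIMSEQ_I)
  fix e :: real assume e: "e > 0"
  have M0: "M \<ge> 0" using rows[of 0] by (meson norm_ge_zero order_trans sum_nonneg)
  define d where "d = e / (4 * (M + 1))"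
  have d: "d > 0" "2 * M * d < e / 2" using e M0 by (simp_all add: d_def field_simps)
  obtain K where K: "\<And>k. k \<ge> K \<Longrightarrow> norm (y k) \<le> d"
    using LIMSEQ_D[OF y d(1)] by (auto intro: less_imp_le)
  have "(\<lambda>m. \<Sum>k<K. (E m k - g k) * y k) \<longlonglongrightarrow> (\<Sum>k<K. (g k - g k) * y k)"
    by (intro tendsto_intros columns)
  then obtain N where N: "\<And>m. m \<ge> N \<Longrightarrow> norm (\<Sum>k<K. (E m k - g k) * y k) < e/2"
    using LIMSEQ_D[of _ 0 "e/2"] e by fastforce
  show "\<exists>N. \<forall>m\<ge>N. norm ((\<Sum>k\<le>m. E m k * y k) - (\<Sum>k. g k * y k)) < e"
  proof (intro exI[of _ "max N K"] allI impI)
    fix m assume m: "max N K \<le> m"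
    have "{..m} = {..<K} \<union> {K..m}" using m by auto
    hence head: "(\<Sum>k\<le>m. E m k * y k) = (\<Sum>k<K. E m k * y k) + (\<Sum>k\<in>{K..m}. E m k * y k)"
      by (simp add: sum.union_disjoint[symmetric] ivl_disj_int)
    obtain Y where "\<And>k. norm (y k) \<le> Y"
      using convergent_imp_Bseq[of y] y by (auto simp: convergent_def Bseq_def)
    hence gy: "summable (\<lambda>k. g k * y k)"
      by (intro summable_norm_cancel[OF norm_suminf_mult_le(1)[OF summable_norm_column_limits]])
    have tail: "(\<Sum>k. g k * y k) = (\<Sum>k. g (k + K) * y (k + K)) + (\<Sum>k<K. g k * y k)"
      by (rule suminf_split_initial_segment[OF gy])
    have E_tail: "norm (\<Sum>k\<in>{K..m}. E m k * y k) \<le> M * d"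
    proof -
      have "norm (\<Sum>k\<in>{K..m}. E m k * y k) \<le> (\<Sum>k\<in>{K..m}. norm (E m k)) * d"
        unfolding sum_distrib_right
        by (rule order_trans[OF norm_sum sum_mono]) (auto simp: norm_mult intro!: mult_left_mono K)
      also have "\<dots> \<le> M * d"
        using rows[of m] sum_mono2[of "{..m}" "{K..m}" "\<lambda>k. norm (E m k)"] d(1)
        by (intro mult_right_mono) auto
      finally show ?thesis .
    qed
    have g_tail: "norm (\<Sum>k. g (k + K) * y (k + K)) \<le> M * d"
      using norm_suminf_tail_le[OF summable_norm_column_limits K] suminf_norm_column_limits_le d(1)
      by (meson mult_right_mono less_imp_le order_trans)
    let ?A = "\<Sum>k<K. (E m k - g k) * y k" and ?B = "\<Sum>k\<in>{K..m}. E m k * y k"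
      and ?C = "\<Sum>k. g (k + K) * y (k + K)"
    have "norm ((\<Sum>k\<le>m. E m k * y k) - (\<Sum>k. g k * y k)) = norm (?A + ?B - ?C)"
      unfolding head tail by (simp add: left_diff_distrib sum_subtractf algebra_simps)
    also have "\<dots> \<le> norm ?A + norm ?B + norm ?C"
      using norm_triangle_ineq4[of "?A + ?B" ?C] norm_triangle_ineq[of ?A ?B] by linarith
    also have "\<dots> < e/2 + M * d + M * d"
      using N[of m] m E_tail g_tail by simp
    also have "\<dots> < e" using d(2) by simp
    finally show "norm ((\<Sum>k\<le>m. E m k * y k) - (\<Sum>k. g k * y k)) < e" .
  qed
qed

end

section \<open>The inverse of \<open>\<^bold>W\<close>\<close>

definition lam_diff :: "(nat \<Rightarrow> real) \<Rightarrow> nat \<Rightarrow> real" where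
  "lam_diff lam k = lam k - lam_prev lam k"

definition lam_mean :: "(nat \<Rightarrow> real) \<Rightarrow> (nat \<Rightarrow> complex) \<Rightarrow> nat \<Rightarrow> complex" where
  "lam_mean lam x n = (1 / of_real (lam n)) * (\<Sum>k = 0..n. of_real (lam_diff lam k) * x k)"

definition lam_mean_inv :: "(nat \<Rightarrow> real) \<Rightarrow> (nat \<Rightarrow> complex) \<Rightarrow> nat \<Rightarrow> complex" where
  "lam_mean_inv lam y k =
     (of_real (lam k) * y k - of_real (lam_prev lam k) * seq_back y 1 k) / of_real (lam_diff lam k)"

definition band :: "real \<Rightarrow> real \<Rightarrow> real \<Rightarrow> (nat \<Rightarrow> complex) \<Rightarrow> nat \<Rightarrow> complex" where
  "band r s t x k = of_real r * x k + of_real s * seq_back x 1 k + of_real t * seq_back x 2 k"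

definition dmat_apply :: "real \<Rightarrow> real \<Rightarrow> real \<Rightarrow> (nat \<Rightarrow> complex) \<Rightarrow> nat \<Rightarrow> complex" where
  "dmat_apply r s t z j = (\<Sum>i\<le>j. dmat r s t j i * z i)"

definition What_inv :: "real \<Rightarrow> real \<Rightarrow> real \<Rightarrow> (nat \<Rightarrow> real) \<Rightarrow> (nat \<Rightarrow> complex) \<Rightarrow> nat \<Rightarrow> complex" where
  "What_inv r s t lam y = dmat_apply r s t (lam_mean_inv lam y)"

lemma What_eq_lam_mean_band: "What r s t lam x = lam_mean lam (band r s t x)"
  by (simp add: fun_eq_iff What_def lam_mean_def band_def lam_diff_def)

context
  fixes lam :: "nat \<Rightarrow> real"
  assumes lam_mono: "strict_mono lam" and lam_pos: "\<And>k. 0 < lam k"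
begin

lemma lam_diff_pos: "lam_diff lam k > 0"
  using lam_pos[of 0] strict_monoD[OF lam_mono, of "k - 1" k]
  by (cases k) (auto simp: lam_diff_def lam_prev_def)

lemma lam_mean_lam_mean_inv: "lam_mean lam (lam_mean_inv lam y) = y"
proof
  fix n
  have "(\<Sum>k = 0..n. of_real (lam_diff lam k) * lam_mean_inv lam y k) = of_real (lam n) * y n"
  proof (induction n)
    case 0
    show ?case using lam_diff_pos[of 0] by (simp add: lam_mean_inv_def lam_prev_def seq_back_def)
  next
    case (Suc n)
    thus ?case using lam_diff_pos[of "Suc n"] by (simp add: lam_mean_inv_def lam_prev_def seq_back_def)
  qed
  thus "lam_mean lam (lam_mean_inv lam y) n = y n"
    using lam_pos[of n] by (simp add: lam_mean_def)
qed

lemma lam_mean_inv_lam_mean: "lam_mean_inv lam (lam_mean lam x) = x"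
proof
  fix k
  have "of_real (lam k) * lam_mean lam x k - of_real (lam_prev lam k) * seq_back (lam_mean lam x) 1 k
      = of_real (lam_diff lam k) * x k"
    using lam_pos[of k] lam_pos[of "k - 1"]
    by (cases k) (simp_all add: lam_mean_def lam_prev_def seq_back_def lam_diff_def)
  thus "lam_mean_inv lam (lam_mean lam x) k = x k"
    using lam_diff_pos[of k] by (simp add: lam_mean_inv_def)
qed

end

definition hsum :: "'a::comm_ring_1 \<Rightarrow> 'a \<Rightarrow> nat \<Rightarrow> 'a" where
  "hsum a b m = (\<Sum>v = 0..m. a ^ (m - v) * b ^ v)"

lemma hsum_0 [simp]: "hsum a b 0 = 1"
  by (simp add: hsum_def)

lemma hsum_Suc: "hsum a b (Suc m) = a * hsum a b m + b ^ Suc m"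
proof -
  have "(\<Sum>v = 0..m. a ^ (Suc m - v) * b ^ v) = a * hsum a b m"
    unfolding hsum_def sum_distrib_left by (rule sum.cong) (auto simp: Suc_diff_le)
  thus ?thesis by (simp add: hsum_def sum.atLeast0_atMost_Suc)
qed

lemma hsum_Suc_Suc: "hsum a b (Suc (Suc m)) = (a + b) * hsum a b (Suc m) - a * b * hsum a b m"
  by (simp add: hsum_Suc algebra_simps)

lemma rho_add: "r \<noteq> 0 \<Longrightarrow> rho1 r s t + rho2 r s t = - of_real s / of_real r"
  by (simp add: rho1_def rho2_def field_simps)

lemma rho_mult: "r \<noteq> 0 \<Longrightarrow> rho1 r s t * rho2 r s t = of_real t / of_real r"
proof -
  assume r: "r \<noteq> 0"
  define c where "c = csqrt (of_real (s^2 - 4*t*r))"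
  have "c * c = of_real (s^2 - 4*t*r)" unfolding c_def by (metis power2_csqrt power2_eq_square)
  hence "(- of_real s + c) * (- of_real s - c) = 4 * of_real t * of_real r"
    by (simp add: algebra_simps power2_eq_square)
  moreover have "rho1 r s t * rho2 r s t = ((- of_real s + c) * (- of_real s - c)) / (4 * of_real r * of_real r)"
    by (simp add: rho1_def rho2_def c_def field_simps)
  ultimately show ?thesis using r by (simp add: field_simps)
qed

lemma dmat_eq_hsum:
  "dmat r s t j i = (if i \<le> j then hsum (rho1 r s t) (rho2 r s t) (j - i) / of_real r else 0)"
  by (simp add: dmat_def hsum_def)

text \<open>\<open>B D = I\<close>: by Vieta, \<open>hsum \<rho>\<^sub>1 \<rho>\<^sub>2\<close> satisfies the recurrence \<open>r h\<^sub>m + s h\<^sub>m\<^sub>-\<^sub>1 + t h\<^sub>m\<^sub>-\<^sub>2 = 0\<close>.\<close>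

lemma band_dmat_column:
  assumes r: "r \<noteq> 0"
  shows "band r s t (\<lambda>j. dmat r s t j i) j = (if j = i then 1 else 0)"
proof -
  define a where "a = rho1 r s t"
  define b where "b = rho2 r s t"
  have ab: "a + b = - of_real s / of_real r" "a * b = of_real t / of_real r"
    using rho_add[OF r] rho_mult[OF r] by (simp_all add: a_def b_def)
  have r': "(of_real r :: complex) \<noteq> 0" using r by simp
  have "j < i \<or> j = i \<or> j = Suc i \<or> (\<exists>m. j = Suc (Suc (i + m)))" by presburger
  then consider "j < i" | "j = i" | "j = Suc i" | m where "j = Suc (Suc (i + m))" by blast
  thus ?thesis
  proof cases
    case 3
    hence "band r s t (\<lambda>j. dmat r s t j i) j = hsum a b 1 + of_real s / of_real r"
      using r' by (auto simp: band_def seq_back_def dmat_eq_hsum a_def b_def)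
    also have "\<dots> = 0" using ab by (simp add: hsum_Suc)
    finally show ?thesis using 3 by simp
  next
    case 4
    hence "band r s t (\<lambda>j. dmat r s t j i) j =
        hsum a b (Suc (Suc m)) + of_real s / of_real r * hsum a b (Suc m) + of_real t / of_real r * hsum a b m"
      using r' by (simp add: band_def seq_back_def dmat_eq_hsum a_def b_def field_simps)
    also have "\<dots> = 0" unfolding hsum_Suc_Suc ab by (simp add: algebra_simps)
    finally show ?thesis using 4 by simp
  qed (use r' in \<open>auto simp: band_def seq_back_def dmat_eq_hsum\<close>)
qed

lemma dmat_apply_eq_sum_atMost:
  "j \<le> J \<Longrightarrow> dmat_apply r s t z j = (\<Sum>i\<le>J. dmat r s t j i * z i)"
  unfolding dmat_apply_def by (rule sum.mono_neutral_left) (auto simp: dmat_def)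

lemma band_dmat_apply:
  assumes r: "r \<noteq> 0"
  shows "band r s t (dmat_apply r s t z) = z"
proof
  fix j
  have shifted: "seq_back (dmat_apply r s t z) a j = (\<Sum>i\<le>j. seq_back (\<lambda>j'. dmat r s t j' i) a j * z i)" for a
    by (cases "j < a") (simp_all add: seq_back_def dmat_apply_eq_sum_atMost[of "j - a" j])
  have "band r s t (dmat_apply r s t z) j = (\<Sum>i\<le>j. band r s t (\<lambda>j'. dmat r s t j' i) j * z i)"
    by (simp add: band_def shifted dmat_apply_def sum_distrib_left sum.distrib algebra_simps)
  also have "\<dots> = (\<Sum>i\<le>j. if i = j then z i else 0)"
    by (rule sum.cong) (auto simp: band_dmat_column[OF r])
  also have "\<dots> = z j" by simp
  finally show "band r s t (dmat_apply r s t z) j = z j" .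
qed

lemma band_inj:
  assumes r: "r \<noteq> 0" and eq: "band r s t x = band r s t x'"
  shows "x = x'"
proof
  fix n
  show "x n = x' n"
  proof (induction n rule: less_induct)
    case (less n)
    hence "seq_back x a n = seq_back x' a n" if "a > 0" for a
      using that by (simp add: seq_back_def)
    hence "of_real r * x n = of_real r * x' n"
      using fun_cong[OF eq, of n] by (simp add: band_def)
    thus ?case using r by simp
  qed
qed

lemma dmat_apply_band: "r \<noteq> 0 \<Longrightarrow> dmat_apply r s t (band r s t x) = x"
  by (rule band_inj[of r s t]) (simp_all add: band_dmat_apply)

lemma c0_lam_B_eq_What_inv_image:
  assumes r: "r \<noteq> 0" and lam: "strict_mono lam" "\<And>k. 0 < lam k"
  shows "x \<in> c0_lam_B r s t lam \<longleftrightarrow> (\<exists>y. y \<longlonglongrightarrow> 0 \<and> x = What_inv r s t lam y)"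
proof -
  have "What_inv r s t lam (What r s t lam x) = x"
    by (simp add: What_inv_def What_eq_lam_mean_band lam_mean_inv_lam_mean[OF lam] dmat_apply_band[OF r])
  moreover have "What r s t lam (What_inv r s t lam y) = y" for y
    by (simp add: What_inv_def What_eq_lam_mean_band band_dmat_apply[OF r] lam_mean_lam_mean_inv[OF lam])
  ultimately show ?thesis unfolding c0_lam_B_def by auto
qed

section \<open>Partial sums of \<open>A x\<close> on \<open>c\<^sub>0\<^sup>\<lambda>(\<^bold>B)\<close>\<close>

definition diag_coeff :: "real \<Rightarrow> (nat \<Rightarrow> real) \<Rightarrow> (nat \<Rightarrow> nat \<Rightarrow> complex) \<Rightarrow> nat \<Rightarrow> nat \<Rightarrow> complex" where
  "diag_coeff r lam a n k = (1 / of_real r) * (of_real (lam k) / of_real (lam k - lam_prev lam k)) * a n k"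

text \<open>Row \<open>m\<close> of the triangular matrix expressing the \<open>m\<close>-th partial sum of \<open>(A x)\<^sub>n\<close>, for
  \<open>x = What_inv y\<close>, in terms of \<open>y\<close>.\<close>

definition ghat_trunc ::
    "real \<Rightarrow> real \<Rightarrow> real \<Rightarrow> (nat \<Rightarrow> real) \<Rightarrow> (nat \<Rightarrow> nat \<Rightarrow> complex) \<Rightarrow> nat \<Rightarrow> nat \<Rightarrow> nat \<Rightarrow> complex" where
  "ghat_trunc r s t lam a n m k =
     (if k < m then ghat_m r s t lam a n k m else if k = m then diag_coeff r lam a n m else 0)"

lemma sum_mult_dmat_apply:
  "(\<Sum>j\<le>m. b j * dmat_apply r s t z j) = (\<Sum>i\<le>m. z i * (\<Sum>j = i..m. dmat r s t j i * b j))"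
proof -
  have "(\<Sum>j\<le>m. b j * dmat_apply r s t z j) = (\<Sum>j\<le>m. \<Sum>i\<le>m. b j * (dmat r s t j i * z i))"
    by (rule sum.cong[OF refl]) (simp add: dmat_apply_eq_sum_atMost[of _ m] sum_distrib_left)
  also have "\<dots> = (\<Sum>i\<le>m. \<Sum>j\<le>m. b j * (dmat r s t j i * z i))" by (rule sum.swap)
  also have "\<dots> = (\<Sum>i\<le>m. z i * (\<Sum>j = i..m. dmat r s t j i * b j))"
  proof (rule sum.cong[OF refl])
    fix i assume "i \<in> {..m}"
    hence "(\<Sum>j\<le>m. b j * (dmat r s t j i * z i)) = (\<Sum>j = i..m. b j * (dmat r s t j i * z i))"
      by (intro sum.mono_neutral_right) (auto simp: dmat_def)
    thus "(\<Sum>j\<le>m. b j * (dmat r s t j i * z i)) = z i * (\<Sum>j = i..m. dmat r s t j i * b j)"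
      by (simp add: sum_distrib_left algebra_simps)
  qed
  finally show ?thesis .
qed

text \<open>Abel summation against \<open>lam_mean_inv\<close> produces the coefficients \<open>ghat_m\<close>.\<close>

lemma sum_mult_What_inv:
  assumes r: "r \<noteq> 0"
  shows "(\<Sum>j\<le>m. a n j * What_inv r s t lam y j) = (\<Sum>k\<le>m. ghat_trunc r s t lam a n m k * y k)"
proof -
  define S where "S i = (\<Sum>j = i..m. dmat r s t j i * a n j)" for i
  define A where "A k = of_real (lam k) / of_real (lam_diff lam k) * S k * y k" for k
  define B where "B k = of_real (lam k) / of_real (lam (Suc k) - lam k) * S (Suc k) * y k" for k
  have shift: "(\<Sum>i\<le>m. of_real (lam_prev lam i) / of_real (lam_diff lam i) * S i * seq_back y 1 i)
      = (\<Sum>k<m. B k)"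
    by (subst sum.atMost_shift) (simp add: B_def seq_back_def lam_prev_def lam_diff_def)
  have "(\<Sum>j\<le>m. a n j * What_inv r s t lam y j) = (\<Sum>i\<le>m. lam_mean_inv lam y i * S i)"
    by (simp add: What_inv_def sum_mult_dmat_apply S_def)
  also have "\<dots> = (\<Sum>i\<le>m. A i) - (\<Sum>k<m. B k)"
    unfolding shift[symmetric] sum_subtractf[symmetric]
    by (rule sum.cong) (simp_all add: A_def lam_mean_inv_def diff_divide_distrib algebra_simps)
  also have "\<dots> = (\<Sum>k<m. A k - B k) + A m"
    by (simp add: sum_subtractf lessThan_Suc_atMost[symmetric])
  also have "\<dots> = (\<Sum>k\<le>m. ghat_trunc r s t lam a n m k * y k)"
    using r
    by (simp add: lessThan_Suc_atMost[symmetric] ghat_trunc_def ghat_m_def diag_coeff_def A_def B_def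
        S_def lam_diff_def dmat_eq_hsum algebra_simps)
  finally show ?thesis .
qed

lemma norm_ghat_trunc_sum:
  "(\<Sum>k\<le>m. norm (ghat_trunc r s t lam a n m k)) =
     (\<Sum>k<m. norm (ghat_m r s t lam a n k m)) + norm (diag_coeff r lam a n m)"
  by (simp add: lessThan_Suc_atMost[symmetric] ghat_trunc_def)

lemma tendsto_sum_atLeastAtMost:
  fixes f :: "nat \<Rightarrow> 'a::real_normed_vector"
  assumes "summable (\<lambda>i. f (i + k))"
  shows "(\<lambda>m. \<Sum>j = k..m. f j) \<longlonglongrightarrow> (\<Sum>i. f (i + k))"
proof (rule LIMSEQ_offset[where k=k])
  have "(\<lambda>m. \<Sum>i<Suc m. f (i + k)) \<longlonglongrightarrow> (\<Sum>i. f (i + k))"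
    using summable_LIMSEQ[OF assms] by (rule LIMSEQ_Suc)
  moreover have "(\<Sum>j = k..m + k. f j) = (\<Sum>i<Suc m. f (i + k))" for m
    using sum.shift_bounds_cl_nat_ivl[of f 0 k m] by (simp add: atLeast0AtMost lessThan_Suc_atMost)
  ultimately show "(\<lambda>m. \<Sum>j = k..m + k. f j) \<longlonglongrightarrow> (\<Sum>i. f (i + k))" by simp
qed

lemma ghat_trunc_tendsto_ghat:
  assumes "\<And>k. summable (\<lambda>i. dmat r s t (i + k) k * a n (i + k))"
  shows "(\<lambda>m. ghat_trunc r s t lam a n m k) \<longlonglongrightarrow> ghat r s t lam a n k"
proof -
  have column: "(\<lambda>m. \<Sum>j = i..m. dmat r s t j i * a n j) \<longlonglongrightarrow> (\<Sum>l. dmat r s t (l + i) i * a n (l + i))"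
    for i using assms by (rule tendsto_sum_atLeastAtMost)
  have "(\<lambda>m. ghat_m r s t lam a n k m) \<longlonglongrightarrow> ghat r s t lam a n k"
    unfolding ghat_m_def ghat_def by (intro tendsto_intros column[of k] column[of "Suc k"])
  moreover have "\<forall>\<^sub>F m in sequentially. ghat_m r s t lam a n k m = ghat_trunc r s t lam a n m k"
    by (rule eventually_sequentiallyI[of "Suc k"]) (simp add: ghat_trunc_def)
  ultimately show ?thesis by (rule Lim_transform_eventually)
qed

lemma lam_mean_unit_tendsto_0:
  assumes lam_top: "filterlim lam at_top sequentially"
  shows "lam_mean lam (\<lambda>j. if j = k then 1 else 0) \<longlonglongrightarrow> 0"
proof -
  have "(\<lambda>n. of_real (lam_diff lam k / lam n) :: complex) \<longlonglongrightarrow> of_real 0"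
    by (intro tendsto_of_real tendsto_divide_0[OF tendsto_const] filterlim_at_top_imp_at_infinity lam_top)
  moreover have "\<forall>\<^sub>F n in sequentially. of_real (lam_diff lam k / lam n) = lam_mean lam (\<lambda>j. if j = k then 1 else 0) n"
    by (rule eventually_sequentiallyI[of k]) (simp add: lam_mean_def if_distrib[of "\<lambda>x. _ * x"] cong: if_cong)
  ultimately show ?thesis by (simp add: Lim_transform_eventually)
qed

lemma What_inv_lam_mean_unit:
  assumes lam: "strict_mono lam" "\<And>k. 0 < lam k"
  shows "What_inv r s t lam (lam_mean lam (\<lambda>j. if j = k then 1 else 0)) j = dmat r s t j k"
  by (simp add: What_inv_def lam_mean_inv_lam_mean[OF lam] dmat_apply_def if_distrib[of "\<lambda>x. _ * x"]
      cong: if_cong) (simp add: dmat_def)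

section \<open>The \<open>\<beta>\<close>-dual of \<open>c\<^sub>0\<^sup>\<lambda>(\<^bold>B)\<close>\<close>

text \<open>Conditions (b)--(d) of the theorem for row \<open>n\<close> of \<open>A\<close>.\<close>

definition in_beta_dual :: "real \<Rightarrow> real \<Rightarrow> real \<Rightarrow> (nat \<Rightarrow> real) \<Rightarrow> (nat \<Rightarrow> nat \<Rightarrow> complex) \<Rightarrow> nat \<Rightarrow> bool" where
  "in_beta_dual r s t lam a n \<longleftrightarrow>
     (\<forall>k. summable (\<lambda>i. dmat r s t (i + k) k * a n (i + k))) \<and>
     bdd_above (range (\<lambda>m. \<Sum>k<m. norm (ghat_m r s t lam a n k m))) \<and>
     bdd_above (range (\<lambda>k. norm (diag_coeff r lam a n k)))"

context
  fixes r s t :: real and lam :: "nat \<Rightarrow> real"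
  assumes r: "r \<noteq> 0" and lam: "strict_mono lam" "\<And>k. 0 < lam k"
begin

lemma in_beta_dual_if_summable:
  assumes lam_top: "filterlim lam at_top sequentially"
    and summable: "\<And>x. x \<in> c0_lam_B r s t lam \<Longrightarrow> summable (\<lambda>k. a n k * x k)"
  shows "in_beta_dual r s t lam a n"
proof -
  have summable_What_inv: "summable (\<lambda>j. a n j * What_inv r s t lam y j)" if "y \<longlonglongrightarrow> 0" for y
    using that c0_lam_B_eq_What_inv_image[OF r lam] summable by blast
  have columns: "summable (\<lambda>i. dmat r s t (i + k) k * a n (i + k))" for k
  proof -
    have "summable (\<lambda>j. dmat r s t j k * a n j)"
      using summable_What_inv[OF lam_mean_unit_tendsto_0[OF lam_top, of k]]
      by (simp add: What_inv_lam_mean_unit[OF lam] mult.commute)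
    thus ?thesis using summable_iff_shift[of "\<lambda>j. dmat r s t j k * a n j" k] by simp
  qed
  have "\<exists>M. \<forall>m. (\<Sum>k\<le>m. norm (ghat_trunc r s t lam a n m k)) \<le> M"
  proof (rule triangular_row_norms_bounded_if_convergent_on_c0)
    fix y :: "nat \<Rightarrow> complex" assume "y \<longlonglongrightarrow> 0"
    thus "convergent (\<lambda>m. \<Sum>k\<le>m. ghat_trunc r s t lam a n m k * y k)"
      using summable_What_inv by (simp add: summable_iff_convergent' sum_mult_What_inv[OF r, symmetric])
  qed
  then obtain M where M: "\<And>m. (\<Sum>k<m. norm (ghat_m r s t lam a n k m)) + norm (diag_coeff r lam a n m) \<le> M"
    by (auto simp: norm_ghat_trunc_sum)
  have "(\<Sum>k<m. norm (ghat_m r s t lam a n k m)) \<le> M" for m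
    using M[of m] norm_ge_zero[of "diag_coeff r lam a n m"] by linarith
  moreover have "norm (diag_coeff r lam a n m) \<le> M" for m
  proof -
    have "0 \<le> (\<Sum>k<m. norm (ghat_m r s t lam a n k m))" by (simp add: sum_nonneg)
    thus ?thesis using M[of m] by linarith
  qed
  ultimately have "bdd_above (range (\<lambda>m. \<Sum>k<m. norm (ghat_m r s t lam a n k m)))"
    and "bdd_above (range (\<lambda>k. norm (diag_coeff r lam a n k)))"
    by (auto intro!: bdd_aboveI2)
  with columns show ?thesis by (simp add: in_beta_dual_def)
qed

context
  fixes a :: "nat \<Rightarrow> nat \<Rightarrow> complex" and n :: nat
  assumes beta: "in_beta_dual r s t lam a n"
begin

lemma ghat_trunc_columns: "(\<lambda>m. ghat_trunc r s t lam a n m k) \<longlonglongrightarrow> ghat r s t lam a n k"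
  using beta by (intro ghat_trunc_tendsto_ghat) (simp add: in_beta_dual_def)

lemma ghat_trunc_bounded: "\<exists>M. \<forall>m. (\<Sum>k\<le>m. norm (ghat_trunc r s t lam a n m k)) \<le> M"
proof -
  obtain M1 M2 where "\<And>m. (\<Sum>k<m. norm (ghat_m r s t lam a n k m)) \<le> M1" "\<And>m. norm (diag_coeff r lam a n m) \<le> M2"
    using beta by (auto simp: in_beta_dual_def bdd_above_def)
  hence "(\<Sum>k\<le>m. norm (ghat_trunc r s t lam a n m k)) \<le> M1 + M2" for m
    by (simp add: norm_ghat_trunc_sum add_mono)
  thus ?thesis by blast
qed

lemma summable_norm_ghat: "summable (\<lambda>k. norm (ghat r s t lam a n k))"
proof -
  obtain M where "\<And>m. (\<Sum>k\<le>m. norm (ghat_trunc r s t lam a n m k)) \<le> M"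
    using ghat_trunc_bounded by blast
  thus ?thesis by (rule summable_norm_column_limits[OF ghat_trunc_columns])
qed

lemma sums_What_inv:
  assumes "y \<longlonglongrightarrow> 0"
  shows "(\<lambda>j. a n j * What_inv r s t lam y j) sums (\<Sum>k. ghat r s t lam a n k * y k)"
proof -
  obtain M where "\<And>m. (\<Sum>k\<le>m. norm (ghat_trunc r s t lam a n m k)) \<le> M"
    using ghat_trunc_bounded by blast
  hence "(\<lambda>m. \<Sum>k\<le>m. ghat_trunc r s t lam a n m k * y k) \<longlonglongrightarrow> (\<Sum>k. ghat r s t lam a n k * y k)"
    by (rule triangular_tendsto_on_c0[OF ghat_trunc_columns _ assms])
  thus ?thesis by (simp add: sums_def_le sum_mult_What_inv[OF r])
qed

end

lemma matrix_class_c0_lam_B_iff: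
  assumes lam_top: "filterlim lam at_top sequentially"
  shows "matrix_class a (c0_lam_B r s t lam) Y \<longleftrightarrow>
    (\<forall>n. in_beta_dual r s t lam a n) \<and> (\<forall>y. y \<longlonglongrightarrow> 0 \<longrightarrow> (\<lambda>n. \<Sum>k. ghat r s t lam a n k * y k) \<in> Y)"
  (is "?A \<longleftrightarrow> ?B \<and> ?G")
proof -
  have Ax: "(\<lambda>n. \<Sum>j. a n j * What_inv r s t lam y j) = (\<lambda>n. \<Sum>k. ghat r s t lam a n k * y k)"
    if "?B" "y \<longlonglongrightarrow> 0" for y
    using that sums_What_inv sums_unique by (metis (no_types, lifting))
  show ?thesis
  proof
    assume ?A
    hence ?B using in_beta_dual_if_summable[OF lam_top] by (simp add: matrix_class_def)
    moreover have ?G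
    proof (intro allI impI)
      fix y :: "nat \<Rightarrow> complex" assume y: "y \<longlonglongrightarrow> 0"
      hence "What_inv r s t lam y \<in> c0_lam_B r s t lam"
        using c0_lam_B_eq_What_inv_image[OF r lam] by blast
      hence "(\<lambda>n. \<Sum>j. a n j * What_inv r s t lam y j) \<in> Y"
        using \<open>?A\<close> unfolding matrix_class_def by blast
      thus "(\<lambda>n. \<Sum>k. ghat r s t lam a n k * y k) \<in> Y" using Ax[OF \<open>?B\<close> y] by simp
    qed
    ultimately show "?B \<and> ?G" ..
  next
    assume "?B \<and> ?G"
    thus ?A
      using Ax sums_What_inv c0_lam_B_eq_What_inv_image[OF r lam]
      by (auto simp: matrix_class_def sums_iff)
  qed
qed

end

theorem theorem13:
  fixes r s t p :: real and lam :: "nat \<Rightarrow> real" and a :: "nat \<Rightarrow> nat \<Rightarrow> complex"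
  assumes "r \<noteq> 0" "s \<noteq> 0" "t \<noteq> 0"
    and "strict_mono lam" "\<forall>k. 0 < lam k" "filterlim lam at_top sequentially"
    and "1 < p"
  shows
   "(matrix_class a (c0_lam_B r s t lam) (ell_p p) \<longleftrightarrow>
      (\<exists>M. \<forall>F. finite F \<longrightarrow>
          summable (\<lambda>n. norm (\<Sum>k\<in>F. ghat r s t lam a n k) powr p) \<and>
          (\<Sum>n. norm (\<Sum>k\<in>F. ghat r s t lam a n k) powr p) \<le> M) \<and>
      (\<forall>k n. summable (\<lambda>i. dmat r s t (i + k) k * a n (i + k))) \<and>
      (\<forall>n. bdd_above (range (\<lambda>m. \<Sum>k<m. norm (ghat_m r s t lam a n k m)))) \<and>
      (\<forall>n. bdd_above (range (\<lambda>k. norm ((1 / of_real r) *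
             (of_real (lam k) / of_real (lam k - lam_prev lam k)) * a n k)))))
    \<and>
    (matrix_class a (c0_lam_B r s t lam) ell_inf \<longleftrightarrow>
      (\<forall>k n. summable (\<lambda>i. dmat r s t (i + k) k * a n (i + k))) \<and>
      (\<forall>n. bdd_above (range (\<lambda>m. \<Sum>k<m. norm (ghat_m r s t lam a n k m)))) \<and>
      (\<forall>n. bdd_above (range (\<lambda>k. norm ((1 / of_real r) *
             (of_real (lam k) / of_real (lam k - lam_prev lam k)) * a n k)))) \<and>
      (\<exists>M. \<forall>n. summable (\<lambda>k. norm (ghat r s t lam a n k)) \<and>
          (\<Sum>k. norm (ghat r s t lam a n k)) \<le> M))"
proof -
  note lam = assms(4,5)[rule_format] and lam_top = assms(6)
  note class_iff = matrix_class_c0_lam_B_iff[OF assms(1) lam lam_top]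
  let ?beta = "\<forall>n. in_beta_dual r s t lam a n"
  have rows: "\<And>n. summable (\<lambda>k. norm (ghat r s t lam a n k))" if ?beta
    using that summable_norm_ghat[OF assms(1) lam] by blast
  have ell_p: "matrix_class a (c0_lam_B r s t lam) (ell_p p) \<longleftrightarrow> ?beta \<and>
      (\<exists>M. \<forall>F. finite F \<longrightarrow> summable (\<lambda>n. norm (\<Sum>k\<in>F. ghat r s t lam a n k) powr p) \<and>
          (\<Sum>n. norm (\<Sum>k\<in>F. ghat r s t lam a n k) powr p) \<le> M)"
    unfolding class_iff using c0_to_ell_p_iff[OF less_imp_le[OF assms(7)] rows] by (intro conj_cong refl)
  have ell_inf: "matrix_class a (c0_lam_B r s t lam) ell_inf \<longleftrightarrow> ?beta \<and>
      (\<exists>M. \<forall>n. summable (\<lambda>k. norm (ghat r s t lam a n k)) \<and> (\<Sum>k. norm (ghat r s t lam a n k)) \<le> M)"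
    unfolding class_iff using c0_to_ell_inf_iff[OF rows] rows by (intro conj_cong refl) simp
  have beta_iff: "?beta \<longleftrightarrow> (\<forall>k n. summable (\<lambda>i. dmat r s t (i + k) k * a n (i + k))) \<and>
      (\<forall>n. bdd_above (range (\<lambda>m. \<Sum>k<m. norm (ghat_m r s t lam a n k m)))) \<and>
      (\<forall>n. bdd_above (range (\<lambda>k. norm ((1 / of_real r) *
             (of_real (lam k) / of_real (lam k - lam_prev lam k)) * a n k))))"
    by (auto simp: in_beta_dual_def diag_coeff_def)
  show ?thesis
    unfolding ell_p ell_inf beta_iff by (simp only: conj_ac)
qed

end
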